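(* There are $15$ syzygetic quadruples. Denote the vanishing order of the differential form $\omega=T\,dz_0\wedge dz_1\wedge dz_2$ (pulled back to $\tilde D$) at $q_\nu=0$ by $k_\nu$. Then one has for $(k_0,k_1,k_2)$ the possibilities $(0,0,0)$ (eight cases), $(1,1,1)$ (one case), $(0,0,1)$ (two cases), $(0,1,0)$ (two cases), $(1,0,0)$ (two cases).
   Context: Genus two, $Z=\begin{pmatrix}z_0&z_1\\ z_1&z_2\end{pmatrix}\in\mathbb{H}_2$. Even theta characteristics $m={a\choose b}\in(\mathbb{Z}/2\mathbb{Z})^4$ (${}^ta\,b=0$), theta constants $\vartheta[m](Z)=\sum_{g\in\mathbb{Z}^2}e^{\pi i(Z[g+a/2]+{}^tb(g+a/2))}$. A syzygetic quadruple is a set of four distinct even characteristics such that the sum of any three is even. For a syzygetic quadruple let $\mathfrak{n}=\{n_1,\dots,n_6\}$ be the complementary even characteristics and $T=T_{\mathfrak{n}}=\prod_{\nu=1}^6\vartheta[n_\nu]$, a cusp form of weight 3 for a conjugate of $\Gamma_{2,0}[2]$ whose character is trivial on $\Gamma_2[4]$. Use the normal coordinates of level 4: $q_0=e^{2\pi i(z_0+z_1)/4}$, $q_2=e^{2\pi i(z_2+z_1)/4}$, $q_1=e^{-2\pi i z_1/4}$; the image $D$ of $\mathbb{H}_2$ is a Reinhardt domain with completion $\tilde D=D\cup\{q\in\mathbb{C}^3;\ q_0q_1q_2=0\}$, which maps locally biholomorphically to Igusa's desingularization $\tilde X(4)$ (monoidal transform along the boundary of the Satake compactification of $\mathbb{H}_2/\Gamma_2[4]$).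 Pulled back to $\tilde D$, $\omega$ becomes $C\,\frac{T}{q_0q_1q_2}\,dq_0\wedge dq_1\wedge dq_2$ with a constant $C$, where $T$ is written as a power series in $q_0,q_1,q_2$. *)

theory Defs
  imports Complex_Main "HOL-Library.Multiset"
begin

text \<open>A characteristic m = (a1,a2,b1,b2) in (Z/2Z)^4, with a = (a1,a2), b = (b1,b2);
  True stands for 1 and False for 0.\<close>
type_synonym tchar = "bool \<times> bool \<times> bool \<times> bool"

definition bit :: "bool \<Rightarrow> int" where
  "bit x = (if x then 1 else 0)"

definition even_char :: "tchar \<Rightarrow> bool" where
  "even_char m = (case m of (a1, a2, b1, b2) \<Rightarrow> even (bit a1 * bit b1 + bit a2 * bit b2))"

definition char_add :: "tchar \<Rightarrow> tchar \<Rightarrow> tchar" where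
  "char_add m n = (case m of (a1, a2, b1, b2) \<Rightarrow> case n of (c1, c2, d1, d2) \<Rightarrow>
      (a1 \<noteq> c1, a2 \<noteq> c2, b1 \<noteq> d1, b2 \<noteq> d2))"

definition even_chars :: "tchar set" where
  "even_chars = {m. even_char m}"

definition syzygetic :: "tchar set \<Rightarrow> bool" where
  "syzygetic S \<longleftrightarrow> S \<subseteq> even_chars \<and> card S = 4 \<and>
     (\<forall>m1\<in>S. \<forall>m2\<in>S. \<forall>m3\<in>S. m1 \<noteq> m2 \<and> m1 \<noteq> m3 \<and> m2 \<noteq> m3 \<longrightarrow>
        even_char (char_add (char_add m1 m2) m3))"

definition syz_quadruples :: "tchar set set" where
  "syz_quadruples = {S. syzygetic S}"

definition compl_chars :: "tchar set \<Rightarrow> tchar set" where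
  "compl_chars S = even_chars - S"

text \<open>The term of the theta series of characteristic m = (a,b) indexed by g in Z^2:
  with x = g + a/2 and y = 2x = 2g + a one has
    exp(pi i (Z[x] + b.x)) = exp(pi i (b1 y1 + b2 y2)/2) * q0^(y1^2/2) q1^((y1-y2)^2/2) q2^(y2^2/2)
  where q0 = e^(2 pi i (z0+z1)/4), q2 = e^(2 pi i (z2+z1)/4), q1 = e^(-2 pi i z1/4).
  theta_exp2 gives the exponents doubled (i.e. exponents of q_nu^(1/2)),
  theta_tc the constant factor.\<close>
definition theta_y :: "tchar \<Rightarrow> int \<times> int \<Rightarrow> int \<times> int" where
  "theta_y m g = (case m of (a1, a2, b1, b2) \<Rightarrow> (2 * fst g + bit a1, 2 * snd g + bit a2))"

definition theta_exp2 :: "tchar \<Rightarrow> int \<times> int \<Rightarrow> int \<times> int \<times> int" where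
  "theta_exp2 m g = (case theta_y m g of (y1, y2) \<Rightarrow> (y1^2, (y1 - y2)^2, y2^2))"

definition theta_tc :: "tchar \<Rightarrow> int \<times> int \<Rightarrow> complex" where
  "theta_tc m g = (case m of (a1, a2, b1, b2) \<Rightarrow> case theta_y m g of (y1, y2) \<Rightarrow>
      exp (pi * \<i> * of_int (bit b1 * y1 + bit b2 * y2) / 2))"

text \<open>Coefficient of q0^(N0/2) q1^(N1/2) q2^(N2/2) in the q-expansion of
  T = prod over the complementary characteristics of theta[n], obtained by multiplying
  out the six theta series term by term and collecting equal monomials
  (for each N only finitely many index families G contribute).\<close>
definition T_coeff :: "tchar set \<Rightarrow> int \<times> int \<times> int \<Rightarrow> complex" where
  "T_coeff S N = (\<Sum>G \<in> {G :: tchar \<Rightarrow> int \<times> int.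
        (\<forall>m. m \<notin> compl_chars S \<longrightarrow> G m = (0, 0)) \<and>
        (\<Sum>m\<in>compl_chars S. fst (theta_exp2 m (G m))) = fst N \<and>
        (\<Sum>m\<in>compl_chars S. fst (snd (theta_exp2 m (G m)))) = fst (snd N) \<and>
        (\<Sum>m\<in>compl_chars S. snd (snd (theta_exp2 m (G m)))) = snd (snd N)}.
      (\<Prod>m\<in>compl_chars S. theta_tc m (G m)))"

definition comp3 :: "nat \<Rightarrow> int \<times> int \<times> int \<Rightarrow> int" where
  "comp3 \<nu> N = (if \<nu> = 0 then fst N else if \<nu> = 1 then fst (snd N) else snd (snd N))"

definition T_ord :: "tchar set \<Rightarrow> nat \<Rightarrow> real" where
  "T_ord S \<nu> = Inf {real_of_int (comp3 \<nu> N) / 2 | N. T_coeff S N \<noteq> 0}"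

text \<open>Vanishing order k_nu of omega = C (T / (q0 q1 q2)) dq0 dq1 dq2 along q_nu = 0.\<close>
definition omega_ord :: "tchar set \<Rightarrow> nat \<Rightarrow> real" where
  "omega_ord S \<nu> = T_ord S \<nu> - 1"

definition kvec :: "tchar set \<Rightarrow> real \<times> real \<times> real" where
  "kvec S = (omega_ord S 0, omega_ord S 1, omega_ord S 2)"

end

theory Submission
  imports Defs "HOL-Library.FuncSet"
begin

text \<open>In the expansion of theta[m] the term of index g carries the exponents
  y1^2, (y1 - y2)^2, y2^2 of q0^(1/2), q1^(1/2), q2^(1/2), where y = 2g + a. Each is at least its
  parity, with equality for all three exactly when g = 0 or g = -a, and for even m these two terms
  do not cancel. Hence T has a nonzero monomial whose exponents are the summed parities over the
  six complementary characteristics, and no monomial has smaller exponents, so k_nu is half that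
  sum minus one. The 15 quadruples and these sums are found by enumerating the four-element
  subsets of the ten even characteristics.\<close>

lemma square_ge_mod_2: "(y::int) mod 2 \<le> y\<^sup>2"
proof (cases "y = 0")
  case False
  then have "0 < y\<^sup>2" by simp
  then show ?thesis using pos_mod_bound[of 2 y] by linarith
qed simp

lemma square_eq_mod_2_iff: "(y::int)\<^sup>2 = y mod 2 \<longleftrightarrow> \<bar>y\<bar> \<le> 1"
proof
  assume "y\<^sup>2 = y mod 2"
  then have "y\<^sup>2 \<le> 1" by (smt (verit) pos_mod_bound)
  then show "\<bar>y\<bar> \<le> 1" by (simp add: abs_square_le_1)
next
  assume "\<bar>y\<bar> \<le> 1"
  then have "y = -1 \<or> y = 0 \<or> y = 1" by linarith
  then show "y\<^sup>2 = y mod 2" by auto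
qed

fun sublists_of_length :: "nat \<Rightarrow> 'a list \<Rightarrow> 'a list list" where
  "sublists_of_length 0 xs = [[]]"
| "sublists_of_length (Suc k) [] = []"
| "sublists_of_length (Suc k) (x # xs) =
     map ((#) x) (sublists_of_length k xs) @ sublists_of_length (Suc k) xs"

lemma subset_in_sublists_of_length:
  "S \<subseteq> set xs \<Longrightarrow> card S = k \<Longrightarrow> \<exists>ys\<in>set (sublists_of_length k xs). S = set ys"
proof (induction k xs arbitrary: S rule: sublists_of_length.induct)
  case (1 xs)
  then have "S = {}" by (meson card_0_eq finite_subset List.finite_set)
  then show ?case by simp
next
  case (2 k)
  then show ?case by simp
next
  case (3 k x xs)
  show ?case
  proof (cases "x \<in> S")
    case True
    with "3.prems" have "S - {x} \<subseteq> set xs" "card (S - {x}) = k"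
      by auto
    then obtain ys where "ys \<in> set (sublists_of_length k xs)" "S - {x} = set ys"
      using "3.IH"(1) by blast
    with True show ?thesis by (intro bexI[of _ "x # ys"]) auto
  next
    case False
    with "3.prems" have "S \<subseteq> set xs" by auto
    then obtain ys where "ys \<in> set (sublists_of_length (Suc k) xs)" "S = set ys"
      using "3.IH"(2) "3.prems"(2) by blast
    then show ?thesis by auto
  qed
qed

text \<open>Twice the minimal exponents of q0, q1, q2 in theta[m]: the parities of y1, y1 - y2, y2.\<close>
definition lowest_exp2 :: "tchar \<Rightarrow> int \<times> int \<times> int" where
  "lowest_exp2 m = (case m of (a1, a2, b1, b2) \<Rightarrow> (bit a1, bit (a1 \<noteq> a2), bit a2))"

definition lowest_terms :: "tchar \<Rightarrow> (int \<times> int) set" where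
  "lowest_terms m = (case m of (a1, a2, b1, b2) \<Rightarrow> {(0, 0), (- bit a1, - bit a2)})"

lemma lowest_exp2_eq_mod_2:
  assumes "theta_y m g = (y1, y2)"
  shows "lowest_exp2 m = (y1 mod 2, (y1 - y2) mod 2, y2 mod 2)"
  using assms by (cases m) (auto simp: lowest_exp2_def theta_y_def bit_def; presburger)

lemma theta_exp2_of_theta_y: "theta_y m g = (y1, y2) \<Longrightarrow> theta_exp2 m g = (y1\<^sup>2, (y1 - y2)\<^sup>2, y2\<^sup>2)"
  by (simp add: theta_exp2_def)

lemma lowest_exp2_le_theta_exp2: "comp3 \<nu> (lowest_exp2 m) \<le> comp3 \<nu> (theta_exp2 m g)"
proof -
  obtain y1 y2 where y: "theta_y m g = (y1, y2)" by fastforce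
  show ?thesis
    by (simp add: lowest_exp2_eq_mod_2[OF y] theta_exp2_of_theta_y[OF y] comp3_def square_ge_mod_2)
qed

lemma theta_exp2_eq_lowest_exp2_iff: "theta_exp2 m g = lowest_exp2 m \<longleftrightarrow> g \<in> lowest_terms m"
proof -
  obtain y1 y2 where y: "theta_y m g = (y1, y2)" by fastforce
  have "theta_exp2 m g = lowest_exp2 m \<longleftrightarrow> \<bar>y1\<bar> \<le> 1 \<and> \<bar>y1 - y2\<bar> \<le> 1 \<and> \<bar>y2\<bar> \<le> 1"
    by (simp add: lowest_exp2_eq_mod_2[OF y] theta_exp2_of_theta_y[OF y] square_eq_mod_2_iff)
  also have "\<dots> \<longleftrightarrow> g \<in> lowest_terms m"
    using y by (cases m; cases g) (auto simp: theta_y_def lowest_terms_def bit_def)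
  finally show ?thesis .
qed

lemma lowest_terms_coeff_nonzero:
  assumes "even_char m"
  shows "(\<Sum>g\<in>lowest_terms m. theta_tc m g) \<noteq> 0"
  using assms
  by (cases m) (auto simp: lowest_terms_def theta_tc_def theta_y_def bit_def even_char_def exp_minus)

definition T_terms :: "tchar set \<Rightarrow> int \<times> int \<times> int \<Rightarrow> (tchar \<Rightarrow> int \<times> int) set" where
  "T_terms S N = {G. (\<forall>m. m \<notin> compl_chars S \<longrightarrow> G m = (0, 0)) \<and>
        (\<Sum>m\<in>compl_chars S. fst (theta_exp2 m (G m))) = fst N \<and>
        (\<Sum>m\<in>compl_chars S. fst (snd (theta_exp2 m (G m)))) = fst (snd N) \<and>
        (\<Sum>m\<in>compl_chars S. snd (snd (theta_exp2 m (G m)))) = snd (snd N)}"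

lemma T_coeff_eq_sum_T_terms:
  "T_coeff S N = (\<Sum>G\<in>T_terms S N. \<Prod>m\<in>compl_chars S. theta_tc m (G m))"
  unfolding T_coeff_def T_terms_def ..

lemma comp3_eq_sum_theta_exp2:
  "G \<in> T_terms S N \<Longrightarrow> comp3 \<nu> N = (\<Sum>m\<in>compl_chars S. comp3 \<nu> (theta_exp2 m (G m)))"
  unfolding T_terms_def comp3_def by auto

definition T_lowest_exp2 :: "tchar set \<Rightarrow> int \<times> int \<times> int" where
  "T_lowest_exp2 S = ((\<Sum>m\<in>compl_chars S. fst (lowest_exp2 m)),
     (\<Sum>m\<in>compl_chars S. fst (snd (lowest_exp2 m))), (\<Sum>m\<in>compl_chars S. snd (snd (lowest_exp2 m))))"

lemma comp3_T_lowest_exp2: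
  "comp3 \<nu> (T_lowest_exp2 S) = (\<Sum>m\<in>compl_chars S. comp3 \<nu> (lowest_exp2 m))"
  by (simp add: T_lowest_exp2_def comp3_def)

lemma T_coeff_nonzero_imp_ge:
  assumes "T_coeff S N \<noteq> 0"
  shows "comp3 \<nu> (T_lowest_exp2 S) \<le> comp3 \<nu> N"
proof -
  have "T_terms S N \<noteq> {}"
    using assms unfolding T_coeff_eq_sum_T_terms by auto
  then obtain G where G: "G \<in> T_terms S N" by blast
  show ?thesis
    unfolding comp3_T_lowest_exp2 comp3_eq_sum_theta_exp2[OF G]
    by (rule sum_mono) (rule lowest_exp2_le_theta_exp2)
qed

definition lowest_families :: "tchar set \<Rightarrow> (tchar \<Rightarrow> int \<times> int) set" where
  "lowest_families S = {G. \<forall>m. (m \<in> compl_chars S \<longrightarrow> G m \<in> lowest_terms m) \<and>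
                              (m \<notin> compl_chars S \<longrightarrow> G m = (0, 0))}"

lemma T_terms_T_lowest_exp2: "T_terms S (T_lowest_exp2 S) = lowest_families S"
proof (intro equalityI subsetI)
  fix G assume G: "G \<in> T_terms S (T_lowest_exp2 S)"
  have comp3_eq: "comp3 \<nu> (lowest_exp2 m) = comp3 \<nu> (theta_exp2 m (G m))" if "m \<in> compl_chars S" for \<nu> m
  proof (rule sum_mono_inv[OF _ lowest_exp2_le_theta_exp2 that])
    show "(\<Sum>m\<in>compl_chars S. comp3 \<nu> (lowest_exp2 m)) =
          (\<Sum>m\<in>compl_chars S. comp3 \<nu> (theta_exp2 m (G m)))"
      using comp3_eq_sum_theta_exp2[OF G] by (simp add: comp3_T_lowest_exp2)
  qed simp
  have "theta_exp2 m (G m) = lowest_exp2 m" if "m \<in> compl_chars S" for m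
    using comp3_eq[OF that, of 0] comp3_eq[OF that, of 1] comp3_eq[OF that, of 2]
    by (cases "theta_exp2 m (G m)"; cases "lowest_exp2 m") (simp add: comp3_def)
  then show "G \<in> lowest_families S"
    using G by (auto simp: lowest_families_def T_terms_def theta_exp2_eq_lowest_exp2_iff)
next
  fix G assume G: "G \<in> lowest_families S"
  then have lowest: "theta_exp2 m (G m) = lowest_exp2 m" if "m \<in> compl_chars S" for m
    using that theta_exp2_eq_lowest_exp2_iff unfolding lowest_families_def by blast
  have sums: "(\<Sum>m\<in>compl_chars S. f (theta_exp2 m (G m))) = (\<Sum>m\<in>compl_chars S. f (lowest_exp2 m))"
    for f :: "int \<times> int \<times> int \<Rightarrow> int"
    using lowest by (intro sum.cong) simp_all
  have "\<forall>m. m \<notin> compl_chars S \<longrightarrow> G m = (0, 0)"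
    using G unfolding lowest_families_def by blast
  then show "G \<in> T_terms S (T_lowest_exp2 S)"
    unfolding T_terms_def T_lowest_exp2_def mem_Collect_eq fst_conv snd_conv
    using sums[of fst] sums[of "\<lambda>N. fst (snd N)"] sums[of "\<lambda>N. snd (snd N)"] by blast
qed

lemma lowest_families_eq_image_PiE:
  "lowest_families S =
     (\<lambda>h m. if m \<in> compl_chars S then h m else (0, 0)) ` PiE (compl_chars S) lowest_terms"
proof (intro equalityI subsetI)
  fix G assume G: "G \<in> lowest_families S"
  then have "G = (\<lambda>m. if m \<in> compl_chars S then restrict G (compl_chars S) m else (0, 0))"
    by (auto simp: lowest_families_def)
  moreover have "restrict G (compl_chars S) \<in> PiE (compl_chars S) lowest_terms"
    using G by (auto simp: lowest_families_def)
  ultimately show "G \<in> (\<lambda>h m. if m \<in> compl_chars S then h m else (0, 0)) ` PiE (compl_chars S) lowest_terms"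
    by blast
qed (auto simp: lowest_families_def)

lemma T_coeff_T_lowest_exp2:
  "T_coeff S (T_lowest_exp2 S) = (\<Prod>m\<in>compl_chars S. \<Sum>g\<in>lowest_terms m. theta_tc m g)"
proof -
  let ?C = "compl_chars S"
  let ?extend = "\<lambda>h m. if m \<in> ?C then h m else (0, 0)"
  have "inj_on ?extend (PiE ?C lowest_terms)"
  proof (rule inj_onI)
    fix h h' assume h: "h \<in> PiE ?C lowest_terms" "h' \<in> PiE ?C lowest_terms"
      and "?extend h = ?extend h'"
    then have "h m = h' m" if "m \<in> ?C" for m
      using fun_cong[of "?extend h" "?extend h'" m] that by simp
    with h show "h = h'" by (rule PiE_ext)
  qed
  then have "T_coeff S (T_lowest_exp2 S) = (\<Sum>h\<in>PiE ?C lowest_terms. \<Prod>m\<in>?C. theta_tc m (?extend h m))"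
    by (simp add: T_coeff_eq_sum_T_terms T_terms_T_lowest_exp2 lowest_families_eq_image_PiE sum.reindex)
  also have "\<dots> = (\<Sum>h\<in>PiE ?C lowest_terms. \<Prod>m\<in>?C. theta_tc m (h m))"
    by (intro sum.cong prod.cong) simp_all
  also have "\<dots> = (\<Prod>m\<in>?C. \<Sum>g\<in>lowest_terms m. theta_tc m g)"
    by (rule prod_sum_PiE[symmetric]) (auto simp: lowest_terms_def split: prod.splits)
  finally show ?thesis .
qed

lemma T_coeff_T_lowest_exp2_nonzero: "T_coeff S (T_lowest_exp2 S) \<noteq> 0"
proof -
  have "compl_chars S \<subseteq> even_chars"
    by (auto simp: compl_chars_def)
  then show ?thesis
    by (auto simp: T_coeff_T_lowest_exp2 even_chars_def lowest_terms_coeff_nonzero)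
qed

lemma T_ord_eq_T_lowest_exp2: "T_ord S \<nu> = comp3 \<nu> (T_lowest_exp2 S) / 2"
  unfolding T_ord_def
proof (rule cInf_eq_minimum)
  show "comp3 \<nu> (T_lowest_exp2 S) / 2 \<in> {real_of_int (comp3 \<nu> N) / 2 |N. T_coeff S N \<noteq> 0}"
    using T_coeff_T_lowest_exp2_nonzero by blast
qed (auto dest: T_coeff_nonzero_imp_ge[of _ _ \<nu>])

definition omega_ord_of_exp2 :: "int \<times> int \<times> int \<Rightarrow> real \<times> real \<times> real" where
  "omega_ord_of_exp2 N = (comp3 0 N / 2 - 1, comp3 1 N / 2 - 1, comp3 2 N / 2 - 1)"

lemma kvec_eq_omega_ord_of_exp2: "kvec S = omega_ord_of_exp2 (T_lowest_exp2 S)"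
  by (simp add: kvec_def omega_ord_def T_ord_eq_T_lowest_exp2 omega_ord_of_exp2_def)

definition even_char_list :: "tchar list" where
  "even_char_list = filter even_char Enum.enum"

lemma set_even_char_list: "set even_char_list = even_chars"
  by (auto simp: even_char_list_def even_chars_def enum_UNIV)

definition syz_quadruple_list :: "tchar list list" where
  "syz_quadruple_list = filter (\<lambda>ys. syzygetic (set ys)) (sublists_of_length 4 even_char_list)"

lemma syz_quadruples_eq: "syz_quadruples = set (map set syz_quadruple_list)"
proof (intro equalityI subsetI)
  fix S assume "S \<in> syz_quadruples"
  then have S: "syzygetic S" "S \<subseteq> set even_char_list" "card S = 4"
    by (auto simp: syz_quadruples_def syzygetic_def set_even_char_list)
  then obtain ys where "ys \<in> set (sublists_of_length 4 even_char_list)" "S = set ys"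
    using subset_in_sublists_of_length by metis
  with S show "S \<in> set (map set syz_quadruple_list)"
    by (auto simp: syz_quadruple_list_def)
qed (auto simp: syz_quadruples_def syz_quadruple_list_def)

lemma syz_quadruple_list_census:
  "length syz_quadruple_list = 15 \<and> distinct (map set syz_quadruple_list) \<and>
   mset (map (T_lowest_exp2 \<circ> set) syz_quadruple_list) =
     replicate_mset 8 (2, 2, 2) + {#(4, 4, 4)#} + replicate_mset 2 (2, 2, 4)
     + replicate_mset 2 (2, 4, 2) + replicate_mset 2 (4, 2, 2)"
  by code_simp

theorem proposition2p4:
  shows "card syz_quadruples = 15 \<and>
    image_mset kvec (mset_set syz_quadruples) =
      replicate_mset 8 (0, 0, 0) + {#(1, 1, 1)#} + replicate_mset 2 (0, 0, 1)
      + replicate_mset 2 (0, 1, 0) + replicate_mset 2 (1, 0, 0)"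
proof
  note census = syz_quadruple_list_census
  have distinct: "distinct (map set syz_quadruple_list)"
    using census by blast
  show "card syz_quadruples = 15"
    using census unfolding syz_quadruples_eq distinct_card[OF distinct] by simp
  have "image_mset kvec (mset_set syz_quadruples) =
      image_mset omega_ord_of_exp2 (mset (map (T_lowest_exp2 \<circ> set) syz_quadruple_list))"
    unfolding syz_quadruples_eq mset_set_set[OF distinct] mset_map kvec_eq_omega_ord_of_exp2
    by (simp add: image_mset.compositionality comp_def)
  also have "\<dots> = replicate_mset 8 (0, 0, 0) + {#(1, 1, 1)#} + replicate_mset 2 (0, 0, 1)
      + replicate_mset 2 (0, 1, 0) + replicate_mset 2 (1, 0, 0)"
    using census by (simp add: omega_ord_of_exp2_def comp3_def)
  finally show "image_mset kvec (mset_set syz_quadruples) = \<dots>" .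
qed
end
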